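(* Let $J : \mathfrak{n} \rightarrow \mathfrak{n}$ be any linear map. $J$ has zero torsion if and only if it is equivalent to one of the endomorphisms defined in the basis $(x_1,x_2,x_3)$ by: (i) $S(\xi^3_3)=\begin{pmatrix} 0&-1&0\\ 1&0&0\\ 0&0&\xi^3_3 \end{pmatrix}$, $\xi^3_3 \in \mathbb{R}$; (ii) $D(\xi^1_1)=\begin{pmatrix} \xi^1_1&0&0\\ 0&\xi^1_1&0\\ 0&0&\frac{(\xi^1_1)^2-1}{2\xi^1_1} \end{pmatrix}$, $\xi^1_1 \in \mathbb{R}$, $\xi^1_1 \neq 0$; (iii) $T(a,b)=\begin{pmatrix} 0&-ab&0\\ 1&b&0\\ 0&0&\frac{ab-1}{b} \end{pmatrix}$, $a,b \in \mathbb{R}$, $b \neq 0$. Any two distinct endomorphisms in the preceding list are non equivalent. $T(a,b)$ is equivalent to $T'(a,b)=\begin{pmatrix} b&-b&0\\ a&0&0\\ 0&0&\frac{ab-1}{b} \end{pmatrix}$.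
   Context: $\mathfrak{n}$ is the real 3-dimensional Heisenberg Lie algebra with basis $(x_1,x_2,x_3)$ and commutation relations $[x_1,x_2]=x_3$. A linear map $J:\mathfrak{g}\to\mathfrak{g}$ on a real Lie algebra has zero torsion if $[JX,JY]-[X,Y]-J[JX,Y]-J[X,JY]=0$ for all $X,Y\in\mathfrak{g}$. Two such maps $J,J'$ are equivalent if $J'=\Phi\circ J\circ\Phi^{-1}$ for some $\Phi\in\mathrm{Aut}\,\mathfrak{g}$. *)

theory Defs
  imports "HOL-Analysis.Analysis"
begin

text \<open>The Heisenberg Lie algebra n = R^3 with basis x1,x2,x3 (standard basis vectors),
  bracket [x1,x2] = x3 extended bilinearly and antisymmetrically.\<close>
definition heis_br :: "real^3 \<Rightarrow> real^3 \<Rightarrow> real^3" where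
  "heis_br X Y = vector [0, 0, X$1 * Y$2 - X$2 * Y$1]"

text \<open>Linear maps n -> n are represented by their matrices in the basis (x1,x2,x3):
  column j holds the coordinates of J x_j, so J applied to X is J *v X.\<close>
definition zero_torsion :: "real^3^3 \<Rightarrow> bool" where
  "zero_torsion J \<longleftrightarrow> (\<forall>X Y.
     heis_br (J *v X) (J *v Y) - heis_br X Y - J *v heis_br (J *v X) Y
       - J *v heis_br X (J *v Y) = 0)"

definition heis_aut :: "real^3^3 \<Rightarrow> bool" where
  "heis_aut P \<longleftrightarrow> invertible P \<and> (\<forall>X Y. P *v heis_br X Y = heis_br (P *v X) (P *v Y))"

definition heis_equiv :: "real^3^3 \<Rightarrow> real^3^3 \<Rightarrow> bool" where
  "heis_equiv J J' \<longleftrightarrow> (\<exists>P. heis_aut P \<and> J' = P ** J ** matrix_inv P)"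

definition mat3 :: "real list \<Rightarrow> real list \<Rightarrow> real list \<Rightarrow> real^3^3" where
  "mat3 r1 r2 r3 = vector [vector r1, vector r2, vector r3]"

definition S_end :: "real \<Rightarrow> real^3^3" where
  "S_end c = mat3 [0, -1, 0] [1, 0, 0] [0, 0, c]"

definition D_end :: "real \<Rightarrow> real^3^3" where
  "D_end d = mat3 [d, 0, 0] [0, d, 0] [0, 0, (d^2 - 1) / (2 * d)]"

definition T_end :: "real \<Rightarrow> real \<Rightarrow> real^3^3" where
  "T_end a b = mat3 [0, -(a*b), 0] [1, b, 0] [0, 0, (a*b - 1) / b]"

definition T'_end :: "real \<Rightarrow> real \<Rightarrow> real^3^3" where
  "T'_end a b = mat3 [b, -b, 0] [a, 0, 0] [0, 0, (a*b - 1) / b]"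

definition normal_forms :: "(real^3^3) set" where
  "normal_forms = range S_end \<union> {D_end d | d. d \<noteq> 0} \<union> {T_end a b | a b. b \<noteq> 0}"

end

theory Submission
  imports Defs
begin

text \<open>Zero torsion forces \<open>J x\<^sub>3 = l x\<^sub>3\<close> with \<open>l \<cdot> tr A = det A - 1\<close>, where \<open>A\<close> is the map
  induced by \<open>J\<close> on \<open>n/\<langle>x\<^sub>3\<rangle> \<cong> \<real>\<^sup>2\<close>. Automorphisms are exactly the block matrices
  \<open>[[B, 0], [s, det B]]\<close>, so equivalence acts on \<open>A\<close> by similarity, fixes \<open>l\<close>, and can clear the
  remaining row of \<open>J\<close> because \<open>det (l - A) = l\<^sup>2 + 1 \<noteq> 0\<close>. A scalar \<open>A\<close> gives \<open>D\<close>; otherwise \<open>A\<close> is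
  similar to its companion matrix, giving \<open>S\<close> if \<open>tr A = 0\<close> (then \<open>det A = 1\<close>) and \<open>T\<close> otherwise.
  The invariants \<open>l\<close>, \<open>tr A\<close>, \<open>det A\<close> and scalarity of \<open>A\<close> separate the normal forms.\<close>

lemma matrix_inv:
  fixes A :: "'a::semiring_1^'n^'m"
  assumes "invertible A"
  shows matrix_inv_right: "A ** matrix_inv A = mat 1"
    and matrix_inv_left: "matrix_inv A ** A = mat 1"
  using someI_ex[OF assms[unfolded invertible_def]] by (simp_all add: matrix_inv_def)

lemma mat3_nth [simp]:
  "mat3 [a,b,c] [d,e,f] [g,h,i] $1$1 = a" "mat3 [a,b,c] [d,e,f] [g,h,i] $1$2 = b"
  "mat3 [a,b,c] [d,e,f] [g,h,i] $1$3 = c" "mat3 [a,b,c] [d,e,f] [g,h,i] $2$1 = d"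
  "mat3 [a,b,c] [d,e,f] [g,h,i] $2$2 = e" "mat3 [a,b,c] [d,e,f] [g,h,i] $2$3 = f"
  "mat3 [a,b,c] [d,e,f] [g,h,i] $3$1 = g" "mat3 [a,b,c] [d,e,f] [g,h,i] $3$2 = h"
  "mat3 [a,b,c] [d,e,f] [g,h,i] $3$3 = i"
  by (simp_all add: mat3_def)

lemma mat3_eta: "M = mat3 [M$1$1, M$1$2, M$1$3] [M$2$1, M$2$2, M$2$3] [M$3$1, M$3$2, M$3$3]"
  by (simp add: vec_eq_iff forall_3 mat3_def)

lemmas entrywise = vec_eq_iff forall_3 matrix_matrix_mult_def matrix_vector_mult_def sum_3 heis_br_def

definition torsion :: "real^3^3 \<Rightarrow> real^3 \<Rightarrow> real^3 \<Rightarrow> real^3" where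
  "torsion J X Y = heis_br (J *v X) (J *v Y) - heis_br X Y - J *v heis_br (J *v X) Y
     - J *v heis_br X (J *v Y)"

definition preserves_centre :: "real^3^3 \<Rightarrow> bool" where
  "preserves_centre M \<longleftrightarrow> M$1$3 = 0 \<and> M$2$3 = 0"

text \<open>The upper-left \<open>2\<times>2\<close> block of a centre-preserving map is the map induced on \<open>n/\<langle>x\<^sub>3\<rangle>\<close>.\<close>

definition block_tr :: "real^3^3 \<Rightarrow> real" where
  "block_tr M = M$1$1 + M$2$2"

definition block_det :: "real^3^3 \<Rightarrow> real" where
  "block_det M = M$1$1 * M$2$2 - M$1$2 * M$2$1"

definition block_scalar :: "real^3^3 \<Rightarrow> bool" where
  "block_scalar M \<longleftrightarrow> M$1$2 = 0 \<and> M$2$1 = 0 \<and> M$1$1 = M$2$2"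

lemma zero_torsion_iff_torsion: "zero_torsion J \<longleftrightarrow> (\<forall>X Y. torsion J X Y = 0)"
  by (simp add: zero_torsion_def torsion_def)

lemma zero_torsion_iff:
  "zero_torsion J \<longleftrightarrow> preserves_centre J \<and> J$3$3 * block_tr J = block_det J - 1"
proof
  assume "zero_torsion J"
  then have torsion: "torsion J X Y = 0" for X Y
    by (simp add: zero_torsion_iff_torsion)
  have "J$2$3 = 0" using torsion[of "vector [1,0,0]" "vector [0,0,1]"]
    by (auto simp: torsion_def entrywise)
  moreover have "J$1$3 = 0" using torsion[of "vector [0,1,0]" "vector [0,0,1]"]
    by (auto simp: torsion_def entrywise)
  moreover have "J$3$3 * block_tr J = block_det J - 1"
    using torsion[of "vector [1,0,0]" "vector [0,1,0]"] calculation
    by (auto simp: torsion_def entrywise block_tr_def block_det_def algebra_simps)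
  ultimately show "preserves_centre J \<and> J$3$3 * block_tr J = block_det J - 1"
    by (simp add: preserves_centre_def)
next
  assume J: "preserves_centre J \<and> J$3$3 * block_tr J = block_det J - 1"
  have "torsion J X Y = 0" for X Y
  proof -
    have "J$3$3 * block_tr J * (X$1 * Y$2 - X$2 * Y$1) = (block_det J - 1) * (X$1 * Y$2 - X$2 * Y$1)"
      using J by simp
    then show ?thesis
      using J by (simp add: torsion_def entrywise preserves_centre_def block_tr_def block_det_def
          algebra_simps)
  qed
  then show "zero_torsion J" by (simp add: zero_torsion_iff_torsion)
qed

lemma heis_aut_iff:
  "heis_aut P \<longleftrightarrow> preserves_centre P \<and> P$3$3 = block_det P \<and> block_det P \<noteq> 0"
proof
  assume aut: "heis_aut P"
  then have "P *v heis_br (vector [1,0,0]) (vector [0,1,0])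
      = heis_br (P *v vector [1,0,0]) (P *v vector [0,1,0])"
    by (simp add: heis_aut_def)
  then have P: "preserves_centre P" "P$3$3 = block_det P"
    by (auto simp: entrywise preserves_centre_def block_det_def algebra_simps)
  have "det P = P$3$3 * block_det P"
    using P by (simp add: det_3 preserves_centre_def block_det_def algebra_simps)
  moreover have "det P \<noteq> 0" using aut invertible_det_nz by (auto simp: heis_aut_def)
  ultimately show "preserves_centre P \<and> P$3$3 = block_det P \<and> block_det P \<noteq> 0"
    using P by auto
next
  assume "preserves_centre P \<and> P$3$3 = block_det P \<and> block_det P \<noteq> 0"
  then have P: "P$1$3 = 0" "P$2$3 = 0" "P$3$3 = P$1$1 * P$2$2 - P$1$2 * P$2$1"
    and "block_det P \<noteq> 0"
    by (auto simp: preserves_centre_def block_det_def)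
  then have "det P \<noteq> 0"
    by (simp add: det_3 block_det_def algebra_simps)
  moreover have "P *v heis_br X Y = heis_br (P *v X) (P *v Y)" for X Y
    by (simp add: entrywise P algebra_simps)
  ultimately show "heis_aut P" by (simp add: heis_aut_def invertible_det_nz)
qed

lemma heis_aut_mult: "heis_aut P \<Longrightarrow> heis_aut Q \<Longrightarrow> heis_aut (P ** Q)"
  by (simp add: heis_aut_def invertible_mult matrix_vector_mul_assoc[symmetric])

lemma heis_equiv_iff_intertwines: "heis_equiv M N \<longleftrightarrow> (\<exists>P. heis_aut P \<and> N ** P = P ** M)"
proof -
  have "N = P ** M ** matrix_inv P \<longleftrightarrow> N ** P = P ** M" if "invertible P" for P
    using matrix_inv_left[OF that] matrix_inv_right[OF that]
    by (metis matrix_mul_assoc matrix_mul_rid)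
  then show ?thesis by (auto simp: heis_equiv_def heis_aut_def)
qed

lemma heis_equiv_trans: "heis_equiv J K \<Longrightarrow> heis_equiv K L \<Longrightarrow> heis_equiv J L"
  unfolding heis_equiv_iff_intertwines by (metis heis_aut_mult matrix_mul_assoc)

lemma torsion_intertwines:
  assumes "heis_aut P" and "K ** P = P ** J"
  shows "torsion K (P *v X) (P *v Y) = P *v torsion J X Y"
proof -
  have KP: "K *v (P *v V) = P *v (J *v V)" for V
    by (simp add: matrix_vector_mul_assoc assms(2))
  have br: "heis_br (P *v V) (P *v W) = P *v heis_br V W" for V W
    using assms(1) by (simp add: heis_aut_def)
  show ?thesis
    by (simp add: torsion_def KP br matrix_vector_mult_diff_distrib)
qed

lemma heis_equiv_zero_torsion:
  assumes "heis_equiv J K"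
  shows "zero_torsion K \<longleftrightarrow> zero_torsion J"
proof -
  obtain P where aut: "heis_aut P" and KP: "K ** P = P ** J"
    using assms heis_equiv_iff_intertwines by blast
  then have inv: "invertible P" by (simp add: heis_aut_def)
  have onto: "V = P *v (matrix_inv P *v V)" for V
    by (simp add: matrix_vector_mul_assoc matrix_inv_right[OF inv])
  have "zero_torsion K \<longleftrightarrow> (\<forall>X Y. torsion K (P *v X) (P *v Y) = 0)"
    unfolding zero_torsion_iff_torsion by (metis onto)
  also have "\<dots> \<longleftrightarrow> (\<forall>X Y. torsion J X Y = 0)"
    using torsion_intertwines[OF aut KP] inj_matrix_vector_mult[OF inv]
    by (metis injD matrix_vector_mult_0_right)
  finally show ?thesis by (simp add: zero_torsion_iff_torsion)
qed

lemma heis_equiv_clear_row: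
  fixes a11 a12 a21 a22 r1 r2 l :: real
  assumes "(l - a11) * (l - a22) - a12 * a21 \<noteq> 0"
  shows "heis_equiv (mat3 [a11, a12, 0] [a21, a22, 0] [r1, r2, l])
                    (mat3 [a11, a12, 0] [a21, a22, 0] [0, 0, l])"
proof -
  define e where "e = (l - a11) * (l - a22) - a12 * a21"
  \<comment> \<open>the row vector \<open>(s1, s2)\<close> solves \<open>s (l - A) = r\<close>, by Cramer's rule\<close>
  define s1 where "s1 = (r1 * (l - a22) + r2 * a21) / e"
  define s2 where "s2 = (r2 * (l - a11) + r1 * a12) / e"
  have "e \<noteq> 0" using assms by (simp add: e_def)
  then have "s1 * e = r1 * (l - a22) + r2 * a21" "s2 * e = r2 * (l - a11) + r1 * a12"
    by (simp_all add: s1_def s2_def)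
  then have "e * (l * s1 - (s1 * a11 + s2 * a21 + r1)) = 0"
    "e * (l * s2 - (s1 * a12 + s2 * a22 + r2)) = 0"
    unfolding e_def by algebra+
  then have s: "l * s1 = s1 * a11 + s2 * a21 + r1" "l * s2 = s1 * a12 + s2 * a22 + r2"
    using \<open>e \<noteq> 0\<close> by auto
  define P where "P = mat3 [1, 0, 0] [0, 1, 0] [s1, s2, 1]"
  have "heis_aut P"
    by (simp add: heis_aut_iff P_def preserves_centre_def block_det_def)
  moreover have "mat3 [a11, a12, 0] [a21, a22, 0] [0, 0, l] ** P
      = P ** mat3 [a11, a12, 0] [a21, a22, 0] [r1, r2, l]"
    using s by (simp add: entrywise P_def algebra_simps)
  ultimately show ?thesis using heis_equiv_iff_intertwines by blast
qed

lemma heis_equiv_block_conj: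
  fixes a11 a12 a21 a22 b11 b12 b21 b22 c11 c12 c21 c22 l :: real
  assumes "b11 * b22 - b12 * b21 \<noteq> 0"
    and "c11 * b11 + c12 * b21 = b11 * a11 + b12 * a21" "c11 * b12 + c12 * b22 = b11 * a12 + b12 * a22"
        "c21 * b11 + c22 * b21 = b21 * a11 + b22 * a21" "c21 * b12 + c22 * b22 = b21 * a12 + b22 * a22"
  shows "heis_equiv (mat3 [a11, a12, 0] [a21, a22, 0] [0, 0, l])
                    (mat3 [c11, c12, 0] [c21, c22, 0] [0, 0, l])"
proof -
  define P where "P = mat3 [b11, b12, 0] [b21, b22, 0] [0, 0, b11 * b22 - b12 * b21]"
  have "heis_aut P"
    using assms(1) by (simp add: heis_aut_iff P_def preserves_centre_def block_det_def)
  moreover have "mat3 [c11, c12, 0] [c21, c22, 0] [0, 0, l] ** P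
      = P ** mat3 [a11, a12, 0] [a21, a22, 0] [0, 0, l]"
    using assms(2-) by (simp add: entrywise P_def algebra_simps)
  ultimately show ?thesis using heis_equiv_iff_intertwines by blast
qed

text \<open>The quantity below is the determinant of the rows \<open>w\<close> and \<open>wA\<close>.\<close>

lemma exists_cyclic_row_vector:
  fixes a11 a12 a21 a22 :: real
  assumes "\<not> (a12 = 0 \<and> a21 = 0 \<and> a11 = a22)"
  obtains w1 w2 where "w1 * (w1 * a12 + w2 * a22) - w2 * (w1 * a11 + w2 * a21) \<noteq> 0"
proof (cases "a12 = 0")
  case True
  then show ?thesis using that[of 0 1] that[of 1 1] assms by (cases "a21 = 0") auto
qed (use that[of 1 0] in simp)

lemma heis_equiv_companion:
  fixes a11 a12 a21 a22 l :: real
  assumes "\<not> (a12 = 0 \<and> a21 = 0 \<and> a11 = a22)"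
  shows "heis_equiv (mat3 [a11, a12, 0] [a21, a22, 0] [0, 0, l])
           (mat3 [0, -(a11 * a22 - a12 * a21), 0] [1, a11 + a22, 0] [0, 0, l])"
proof -
  obtain w1 w2 where w: "w1 * (w1 * a12 + w2 * a22) - w2 * (w1 * a11 + w2 * a21) \<noteq> 0"
    using exists_cyclic_row_vector assms by blast
  \<comment> \<open>\<open>B\<close> has rows \<open>wA - tr(A) w\<close> and \<open>w\<close>; the first block equation is Cayley--Hamilton\<close>
  show ?thesis
    by (rule heis_equiv_block_conj[where ?b11.0 = "w1 * a11 + w2 * a21 - (a11 + a22) * w1"
          and ?b12.0 = "w1 * a12 + w2 * a22 - (a11 + a22) * w2" and ?b21.0 = w1 and ?b22.0 = w2])
      (use w in \<open>simp_all add: algebra_simps\<close>)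
qed

lemma zero_torsion_equiv_normal_form:
  assumes "zero_torsion J"
  shows "(\<exists>c. heis_equiv J (S_end c)) \<or> (\<exists>d. d \<noteq> 0 \<and> heis_equiv J (D_end d))
    \<or> (\<exists>a b. b \<noteq> 0 \<and> heis_equiv J (T_end a b))"
proof -
  obtain a11 a12 a21 a22 r1 r2 l where J: "J = mat3 [a11, a12, 0] [a21, a22, 0] [r1, r2, l]"
    and tor: "l * (a11 + a22) = a11 * a22 - a12 * a21 - 1"
    using assms mat3_eta[of J]
    by (auto simp: zero_torsion_iff preserves_centre_def block_tr_def block_det_def)
  define J0 where "J0 = mat3 [a11, a12, 0] [a21, a22, 0] [0, 0, l]"
  have "(l - a11) * (l - a22) - a12 * a21 = l\<^sup>2 + 1" using tor by algebra
  also have "\<dots> > 0" by (simp add: add_nonneg_pos)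
  finally have "heis_equiv J J0"
    unfolding J J0_def by (intro heis_equiv_clear_row) simp
  show ?thesis
  proof (cases "a12 = 0 \<and> a21 = 0 \<and> a11 = a22")
    case True
    with tor have "a11 \<noteq> 0" by auto
    with tor True have "l = (a11\<^sup>2 - 1) / (2 * a11)"
      by (simp add: field_simps power2_eq_square)
    with True have "J0 = D_end a11" by (simp add: J0_def D_end_def)
    with \<open>heis_equiv J J0\<close> \<open>a11 \<noteq> 0\<close> show ?thesis by blast
  next
    case False
    define C where "C = mat3 [0, -(a11 * a22 - a12 * a21), 0] [1, a11 + a22, 0] [0, 0, l]"
    have "heis_equiv J C"
      using heis_equiv_trans[OF \<open>heis_equiv J J0\<close>] heis_equiv_companion[OF False]
      by (simp add: J0_def C_def)
    show ?thesis
    proof (cases "a11 + a22 = 0")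
      case True
      with tor have "C = S_end l" by (simp add: C_def S_end_def)
      with \<open>heis_equiv J C\<close> show ?thesis by blast
    next
      case False
      define a where "a = (a11 * a22 - a12 * a21) / (a11 + a22)"
      have "a * (a11 + a22) = a11 * a22 - a12 * a21" using False by (simp add: a_def)
      moreover from this tor False have "(a * (a11 + a22) - 1) / (a11 + a22) = l"
        by (simp add: field_simps)
      ultimately have "C = T_end a (a11 + a22)" by (simp add: C_def T_end_def)
      with \<open>heis_equiv J C\<close> False show ?thesis by blast
    qed
  qed
qed

lemma heis_equiv_invariants:
  assumes "heis_equiv M N" and "preserves_centre M" and "preserves_centre N"
  shows "N$3$3 = M$3$3" and "block_tr N = block_tr M" and "block_det N = block_det M"
    and "block_scalar N \<longleftrightarrow> block_scalar M"
proof -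
  obtain P where "heis_aut P" and NP: "N ** P = P ** M"
    using assms(1) heis_equiv_iff_intertwines by blast
  then have P: "P$1$3 = 0" "P$2$3 = 0" "P$3$3 = block_det P" and "block_det P \<noteq> 0"
    by (auto simp: heis_aut_iff preserves_centre_def)
  have "(N ** P)$i$j = (P ** M)$i$j" for i j using NP by simp
  note this[of 1 1] this[of 1 2] this[of 2 1] this[of 2 2] this[of 3 3]
  \<comment> \<open>the upper-left blocks are similar via that of \<open>P\<close>\<close>
  then have BP: "N$1$1 * P$1$1 + N$1$2 * P$2$1 = P$1$1 * M$1$1 + P$1$2 * M$2$1"
    "N$1$1 * P$1$2 + N$1$2 * P$2$2 = P$1$1 * M$1$2 + P$1$2 * M$2$2"
    "N$2$1 * P$1$1 + N$2$2 * P$2$1 = P$2$1 * M$1$1 + P$2$2 * M$2$1"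
    "N$2$1 * P$1$2 + N$2$2 * P$2$2 = P$2$1 * M$1$2 + P$2$2 * M$2$2"
    and "N$3$3 * block_det P = block_det P * M$3$3"
    using assms(2,3) P by (simp_all add: entrywise preserves_centre_def)
  with \<open>block_det P \<noteq> 0\<close> show "N$3$3 = M$3$3" by simp
  have "block_det P * (block_tr N - block_tr M) = 0"
    using BP unfolding block_det_def block_tr_def by algebra
  with \<open>block_det P \<noteq> 0\<close> show "block_tr N = block_tr M" by simp
  have "block_det P * (block_det N - block_det M) = 0"
    using BP unfolding block_det_def by algebra
  with \<open>block_det P \<noteq> 0\<close> show "block_det N = block_det M" by simp
  show "block_scalar N \<longleftrightarrow> block_scalar M"
  proof
    assume "block_scalar N"
    then have "block_det P * M$1$2 = 0" "block_det P * M$2$1 = 0"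
      "block_det P * (M$1$1 - M$2$2) = 0"
      using BP unfolding block_det_def block_scalar_def by algebra+
    with \<open>block_det P \<noteq> 0\<close> show "block_scalar M" by (simp add: block_scalar_def)
  next
    assume "block_scalar M"
    then have "block_det P * N$1$2 = 0" "block_det P * N$2$1 = 0"
      "block_det P * (N$1$1 - N$2$2) = 0"
      using BP unfolding block_det_def block_scalar_def by algebra+
    with \<open>block_det P \<noteq> 0\<close> show "block_scalar N" by (simp add: block_scalar_def)
  qed
qed

lemma normal_forms_cases:
  assumes "M \<in> normal_forms"
  obtains c where "M = S_end c" | d where "d \<noteq> 0" "M = D_end d"
    | a b where "b \<noteq> 0" "M = T_end a b"
  using assms unfolding normal_forms_def by blast

lemma normal_forms_preserve_centre: "M \<in> normal_forms \<Longrightarrow> preserves_centre M"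
  by (erule normal_forms_cases) (simp_all add: preserves_centre_def S_end_def D_end_def T_end_def)

lemma normal_forms_eqI:
  assumes "M \<in> normal_forms" and "N \<in> normal_forms" and "N$3$3 = M$3$3"
    and "block_tr N = block_tr M" and "block_det N = block_det M"
    and "block_scalar N \<longleftrightarrow> block_scalar M"
  shows "M = N"
  using assms
  by (auto elim!: normal_forms_cases
      simp: block_tr_def block_det_def block_scalar_def S_end_def D_end_def T_end_def)

lemma heis_equiv_T_T':
  assumes "b \<noteq> 0"
  shows "heis_equiv (T_end a b) (T'_end a b)"
  unfolding T_end_def T'_end_def
  by (rule heis_equiv_block_conj[where ?b11.0 = 0 and ?b12.0 = 1 and ?b21.0 = "-1/b" and ?b22.0 = 0])
    (use assms in simp_all)

lemma normal_forms_zero_torsion: "M \<in> normal_forms \<Longrightarrow> zero_torsion M"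
  by (erule normal_forms_cases)
    (simp_all add: zero_torsion_iff preserves_centre_def block_tr_def block_det_def
      S_end_def D_end_def T_end_def field_simps power2_eq_square)

theorem lemma3:
  shows "(\<forall>J. zero_torsion J \<longleftrightarrow>
            (\<exists>c. heis_equiv J (S_end c))
          \<or> (\<exists>d. d \<noteq> 0 \<and> heis_equiv J (D_end d))
          \<or> (\<exists>a b. b \<noteq> 0 \<and> heis_equiv J (T_end a b)))
       \<and> (\<forall>M\<in>normal_forms. \<forall>N\<in>normal_forms. M \<noteq> N \<longrightarrow> \<not> heis_equiv M N)
       \<and> (\<forall>a b. b \<noteq> 0 \<longrightarrow> heis_equiv (T_end a b) (T'_end a b))"
proof (intro conjI allI ballI impI iffI)
  fix J
  assume "(\<exists>c. heis_equiv J (S_end c)) \<or> (\<exists>d. d \<noteq> 0 \<and> heis_equiv J (D_end d))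
    \<or> (\<exists>a b. b \<noteq> 0 \<and> heis_equiv J (T_end a b))"
  then obtain N where "N \<in> normal_forms" and "heis_equiv J N"
    unfolding normal_forms_def by blast
  then show "zero_torsion J"
    using heis_equiv_zero_torsion normal_forms_zero_torsion by blast
next
  fix M N
  assume "M \<in> normal_forms" "N \<in> normal_forms" "M \<noteq> N"
  then show "\<not> heis_equiv M N"
    using heis_equiv_invariants normal_forms_preserve_centre normal_forms_eqI by metis
qed (simp_all add: zero_torsion_equiv_normal_form heis_equiv_T_T')

end
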